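(* For any formal series $\hat\psi(\hbar^2,y)$, $\hat y(\hbar^2,z)$ with $\hat\psi(\hbar^2,0)=\hat y(\hbar^2,0)=0$, and all $g\ge0$, $n\ge1$, $$2!\,[\hbar^{2g-2+n}u^2]\,\mathcal{T}_n(z_1;z_2,\dots,z_n;u)=W_{g-1,n+1}(z_1,z_1,z_2,\dots,z_n)+\sum_{\substack{g_1+g_2=g\\ I\sqcup J=\{2,\dots,n\}}}W_{g_1,|I|+1}(z_1,z_I)W_{g_2,|J|+1}(z_1,z_J),$$ where a factor $W_{0,2}$ with two equal arguments is replaced by $D_1D_2H_{0,2}$ on the diagonal.
   Context: $Z_{\hat\psi,\hat y}=\sum_\lambda s_\lambda(p)s_\lambda(\hat y_1/\hbar,\hat y_2/\hbar,\dots)\exp(\sum_{(i,j)\in\lambda}\hat\psi(\hbar^2,\hbar(i-j)))$, $\hat y=\sum\hat y_iz^i$, Schur functions in power sums; $H_{g,n}=\sum_{k_i\ge1}([\hbar^{2g-2+n}]\partial^n\log Z/\partial p_{k_1}\cdots\partial p_{k_n}|_{p=0})\prod X_i^{k_i}$; $\psi=\hat\psi(0,\cdot)$, $y=\hat y(0,\cdot)$, $X(z)=ze^{-\psi(y(z))}$ (formal change of variables at $0$), $Q=1-zy'\psi'(y)$, $D_i=X_i\partial_{X_i}=Q(z_i)^{-1}z_i\partial_{z_i}$; $W_{g,n}=D_1\cdots D_nH_{g,n}$ for $(g,n)\ne(0,2)$, $W_{0,2}=D_1D_2H_{0,2}+X_1X_2/(X_1-X_2)^2$, $W$ with negative genus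 is $0$; $W_n=\sum_g\hbar^{2g-2+n}W_{g,n}$; $\mathcal{S}(u)=(e^{u/2}-e^{-u/2})/u$. $T_n(z_1;z_2,\dots,z_n;u)=\sum_{k\ge1}\frac1{k!}\big(\prod_{i=1}^k|_{z_{\bar i}=z_1}u\hbar\mathcal{S}(u\hbar D_{\bar i})\big)W_{k+n-1}(z_{\bar1},\dots,z_{\bar k},z_2,\dots,z_n)$ (operators applied in auxiliary variables $z_{\bar i}$, then $z_{\bar i}=z_1$; any $W_{0,2}$ factor with two barred arguments is replaced by $DDH_{0,2}$), and $\mathcal{T}_n=\frac{\mathcal{S}(u\hbar D_1)}{\hbar\mathcal{S}(u\hbar)}\sum_{l\ge1}\frac1{l!}\sum_{J_1\sqcup\dots\sqcup J_l=\{2,\dots,n\}}\prod_{i=1}^lT_{|J_i|+1}(z_1;z_{J_i};u)$ (ordered decompositions, parts possibly empty). *)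

theory Defs
  imports "HOL-Library.Poly_Mapping" "HOL-Computational_Algebra.Formal_Laurent_Series"
          "HOL-Combinatorics.Permutations"
begin

definition is_partition :: "nat list \<Rightarrow> bool" where
  "is_partition lam \<longleftrightarrow> sorted_wrt (\<ge>) lam \<and> (\<forall>x\<in>set lam. 0 < x)"

definition partitions_of :: "nat \<Rightarrow> nat list set" where
  "partitions_of d = {lam. is_partition lam \<and> sum_list lam = d}"

definition zee :: "nat list \<Rightarrow> nat" where
  "zee mu = (\<Prod>k\<in>set mu. k ^ count_list mu k * fact (count_list mu k))"

text \<open>Polynomials in the power sums p_1, p_2, ...: a monomial is a finitely supported
  exponent map nat =>0 nat.\<close>
type_synonym 'a ppoly = "(nat \<Rightarrow>\<^sub>0 nat) \<Rightarrow>\<^sub>0 'a"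

definition pvar :: "nat \<Rightarrow> 'a::comm_ring_1 ppoly" where
  "pvar k = Poly_Mapping.single (Poly_Mapping.single k 1) 1"

definition p_mu :: "nat list \<Rightarrow> 'a::comm_ring_1 ppoly" where
  "p_mu mu = prod_list (map pvar mu)"

text \<open>Complete homogeneous symmetric function h_d = sum_{mu |- d} p_mu / z_mu (0 for d < 0).\<close>
definition hcompl :: "int \<Rightarrow> 'a::field_char_0 ppoly" where
  "hcompl d = (if d < 0 then 0 else
     (\<Sum>mu\<in>partitions_of (nat d). Poly_Mapping.single 0 (1 / of_nat (zee mu)) * p_mu mu))"

text \<open>Schur function in power sums via Jacobi--Trudi: s_lam = det (h_{lam_i - i + j}).\<close>
definition schur :: "nat list \<Rightarrow> 'a::field_char_0 ppoly" where
  "schur lam = (\<Sum>\<sigma> | \<sigma> permutes {..<length lam}.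
      of_int (sign \<sigma>) * (\<Prod>i<length lam. hcompl (int (lam ! i) - int i + int (\<sigma> i))))"

definition peval :: "(nat \<Rightarrow> 'a::field_char_0 fls) \<Rightarrow> 'a ppoly \<Rightarrow> 'a fls" where
  "peval q (P::'a ppoly) = (\<Sum>m\<in>Poly_Mapping.keys P. fls_const (Poly_Mapping.lookup P m) * (\<Prod>k\<in>Poly_Mapping.keys m. q k ^ Poly_Mapping.lookup m k))"

text \<open>Input data: psihat a m = coefficient of (hbar^2)^a y^m in psihat(hbar^2,y);
  yhat a i = coefficient of (hbar^2)^a z^i in yhat(hbar^2,z).\<close>

text \<open>yhat_i / hbar as a Laurent series in hbar.\<close>
definition yq :: "(nat \<Rightarrow> nat \<Rightarrow> 'a::field_char_0) \<Rightarrow> nat \<Rightarrow> 'a fls" where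
  "yq yhat i = fls_shift 1 (fps_to_fls (Abs_fps (\<lambda>N. if even N then yhat (N div 2) i else 0)))"

text \<open>Cells (i,j) of lam: row i, column j, 1-based.\<close>
definition cells :: "nat list \<Rightarrow> (nat \<times> nat) set" where
  "cells lam = {(i,j). 1 \<le> i \<and> i \<le> length lam \<and> 1 \<le> j \<and> j \<le> lam ! (i - 1)}"

text \<open>sum_{(i,j) in lam} psihat(hbar^2, hbar(i-j)) as a power series in hbar.\<close>
definition contsum :: "(nat \<Rightarrow> nat \<Rightarrow> 'a::field_char_0) \<Rightarrow> nat list \<Rightarrow> 'a fps" where
  "contsum psihat lam = Abs_fps (\<lambda>N. \<Sum>c\<in>cells lam. \<Sum>a\<le>N div 2.
       psihat a (N - 2 * a) * (of_int (int (fst c) - int (snd c))) ^ (N - 2 * a))"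

definition expfac :: "(nat \<Rightarrow> nat \<Rightarrow> 'a::field_char_0) \<Rightarrow> nat list \<Rightarrow> 'a fls" where
  "expfac psihat lam = fps_to_fls (fps_exp 1 oo contsum psihat lam)"

text \<open>Z as a formal series in the p's: coefficient of the p-monomial m (a Laurent series in hbar).\<close>
definition Zc :: "(nat \<Rightarrow> nat \<Rightarrow> 'a::field_char_0) \<Rightarrow> (nat \<Rightarrow> nat \<Rightarrow> 'a) \<Rightarrow> (nat \<Rightarrow>\<^sub>0 nat) \<Rightarrow> 'a fls" where
  "Zc psihat yhat m = (\<Sum>lam\<in>{lam. is_partition lam \<and> Poly_Mapping.lookup (schur lam :: 'a ppoly) m \<noteq> 0}.
      fls_const (Poly_Mapping.lookup (schur lam) m) * peval (yq yhat) (schur lam) * expfac psihat lam)"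

definition pconv :: "((nat \<Rightarrow>\<^sub>0 nat) \<Rightarrow> 'a::comm_ring_1) \<Rightarrow> ((nat \<Rightarrow>\<^sub>0 nat) \<Rightarrow> 'a) \<Rightarrow> (nat \<Rightarrow>\<^sub>0 nat) \<Rightarrow> 'a" where
  "pconv F G m = (\<Sum>ab\<in>{(a,b). a + b = m}. F (fst ab) * G (snd ab))"

fun ppw :: "((nat \<Rightarrow>\<^sub>0 nat) \<Rightarrow> 'a::comm_ring_1) \<Rightarrow> nat \<Rightarrow> (nat \<Rightarrow>\<^sub>0 nat) \<Rightarrow> 'a" where
  "ppw F 0 = (\<lambda>m. if m = 0 then 1 else 0)"
| "ppw F (Suc j) = pconv F (ppw F j)"

definition logZ :: "(nat \<Rightarrow> nat \<Rightarrow> 'a::field_char_0) \<Rightarrow> (nat \<Rightarrow> nat \<Rightarrow> 'a) \<Rightarrow> (nat \<Rightarrow>\<^sub>0 nat) \<Rightarrow> 'a fls" where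
  "logZ psihat yhat m =
     (let Zm1 = (\<lambda>m. Zc psihat yhat m - (if m = 0 then 1 else 0)) in
      \<Sum>j\<in>{j. 1 \<le> j \<and> ppw Zm1 j m \<noteq> 0}. fls_const ((-1) ^ (j + 1) / of_nat j) * ppw Zm1 j m)"

definition pmon :: "nat list \<Rightarrow> (nat \<Rightarrow>\<^sub>0 nat)" where
  "pmon ks = sum_list (map (\<lambda>k. Poly_Mapping.single k 1) ks)"

text \<open>Hc g ks = [hbar^(2g-2+n)] d^n log Z / dp_{k_1}...dp_{k_n} at p=0 (n = length ks),
  i.e. the coefficient of X_1^{k_1}...X_n^{k_n} in H_{g,n}.\<close>
definition Hc :: "(nat \<Rightarrow> nat \<Rightarrow> 'a::field_char_0) \<Rightarrow> (nat \<Rightarrow> nat \<Rightarrow> 'a) \<Rightarrow> nat \<Rightarrow> nat list \<Rightarrow> 'a" where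
  "Hc psihat yhat g ks =
     fls_nth (logZ psihat yhat (pmon ks)) (2 * int g - 2 + int (length ks)) *
     (\<Prod>k\<in>Poly_Mapping.keys (pmon ks). fact (Poly_Mapping.lookup (pmon ks) k))"

text \<open>Coefficient of prod_i X_i^{a_i} in W_{g,n}(X_1,...,X_n), n = length a
  (all k_i >= 1 for the regular part, D_i multiplies by a_i). For (g,n)=(0,2) and sing = True
  the term X_1X_2/(X_1-X_2)^2 is added, expanded in the region |X_1| < |X_2|
  (first argument small): sum_{m>=1} m X_1^m X_2^(-m). sing = False means it is replaced by DDH_{0,2}.\<close>
definition Wc :: "(nat \<Rightarrow> nat \<Rightarrow> 'a::field_char_0) \<Rightarrow> (nat \<Rightarrow> nat \<Rightarrow> 'a) \<Rightarrow> nat \<Rightarrow> int list \<Rightarrow> bool \<Rightarrow> 'a" where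
  "Wc psihat yhat g a sing =
     (if (\<forall>x\<in>set a. 1 \<le> x) then of_int (prod_list a) * Hc psihat yhat g (map nat a) else 0)
   + (if g = 0 \<and> sing \<and> length a = 2 \<and> 1 \<le> a ! 0 \<and> a ! 1 = - (a ! 0) then of_int (a ! 0) else 0)"

text \<open>F h e x = coefficient of hbar^h u^e prod_i X_i^(x i).\<close>
type_synonym 'a ser = "int \<Rightarrow> nat \<Rightarrow> (nat \<Rightarrow> int) \<Rightarrow> 'a"

text \<open>Product (convolution; in every use below all coefficient sums are finite).\<close>
definition sprod :: "'a::comm_ring_1 ser \<Rightarrow> 'a ser \<Rightarrow> 'a ser" where
  "sprod F G h e x = (\<Sum>pq\<in>{((h1,e1,x1),(h2,e2,x2)). h1 + h2 = h \<and> e1 + e2 = e \<and>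
        (\<forall>i. x1 i + x2 i = x i) \<and> F h1 e1 x1 \<noteq> 0 \<and> G h2 e2 x2 \<noteq> 0}.
      (case pq of ((h1,e1,x1),(h2,e2,x2)) \<Rightarrow> F h1 e1 x1 * G h2 e2 x2))"

definition sone :: "'a::comm_ring_1 ser" where
  "sone h e x = (if h = 0 \<and> e = 0 \<and> x = (\<lambda>_. 0) then 1 else 0)"

definition ssum :: "('i \<Rightarrow> 'a::comm_ring_1 ser) \<Rightarrow> 'i set \<Rightarrow> 'a ser" where
  "ssum F I h e x = (\<Sum>i\<in>{i\<in>I. F i h e x \<noteq> 0}. F i h e x)"

definition sscale :: "'a::comm_ring_1 \<Rightarrow> 'a ser \<Rightarrow> 'a ser" where
  "sscale c F h e x = c * F h e x"

definition sshiftH :: "int \<Rightarrow> 'a::comm_ring_1 ser \<Rightarrow> 'a ser" where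
  "sshiftH d F h e x = F (h - d) e x"

definition expvec :: "nat list \<Rightarrow> int list \<Rightarrow> (nat \<Rightarrow> int)" where
  "expvec vs a = (\<lambda>i. \<Sum>j<length vs. if vs ! j = i then a ! j else 0)"

text \<open>W_{g,n}(X_{vs_1},...,X_{vs_n}) as a series (variables may repeat).\<close>
definition Wser :: "(nat \<Rightarrow> nat \<Rightarrow> 'a::field_char_0) \<Rightarrow> (nat \<Rightarrow> nat \<Rightarrow> 'a) \<Rightarrow> nat \<Rightarrow> nat list \<Rightarrow> bool \<Rightarrow> 'a ser" where
  "Wser psihat yhat g vs sing =
     ssum (\<lambda>a h e x. if h = 0 \<and> e = 0 \<and> x = expvec vs a then Wc psihat yhat g a sing else 0)
          {a. length a = length vs}"

text \<open>S(t) = (e^(t/2) - e^(-t/2))/t = sum_j Sco j t^j.\<close>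
definition Sco :: "nat \<Rightarrow> 'a::field_char_0" where
  "Sco j = (if even j then 1 / (2 ^ j * fact (j + 1)) else 0)"

definition Sfps :: "'a::field_char_0 fps" where
  "Sfps = Abs_fps Sco"

text \<open>The operator u hbar S(u hbar D_v), D_v = X_v d/dX_v.\<close>
definition opSig :: "nat \<Rightarrow> 'a::field_char_0 ser \<Rightarrow> 'a ser" where
  "opSig v F h e x = (\<Sum>j<e. of_int (x v) ^ j * Sco j * F (h - int (j + 1)) (e - (j + 1)) x)"

text \<open>The operator S(u hbar D_1).\<close>
definition opS1 :: "'a::field_char_0 ser \<Rightarrow> 'a ser" where
  "opS1 F h e x = (\<Sum>j\<le>e. of_int (x 1) ^ j * Sco j * F (h - int j) (e - j) x)"

text \<open>Substitution X_v := X_1 (v different from 1).\<close>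
definition ssubst :: "nat \<Rightarrow> 'a::comm_ring_1 ser \<Rightarrow> 'a ser" where
  "ssubst v F h e x = (if x v \<noteq> 0 then 0 else
     (\<Sum>t\<in>{t. F h e (x(1 := x 1 - t, v := t)) \<noteq> 0}. F h e (x(1 := x 1 - t, v := t))))"

text \<open>1/(hbar S(u hbar)).\<close>
definition sinvS :: "'a::field_char_0 ser" where
  "sinvS h e x = (if x = (\<lambda>_. 0) \<and> h = int e - 1 then fps_nth (inverse Sfps) e else 0)"

text \<open>T_{|J|+1}(z_1; z_J; u). The auxiliary barred variables are X_{n+1},...,X_{n+k};
  the operators act on them, then they are set equal to X_1.\<close>
definition Tser :: "(nat \<Rightarrow> nat \<Rightarrow> 'a::field_char_0) \<Rightarrow> (nat \<Rightarrow> nat \<Rightarrow> 'a) \<Rightarrow> nat \<Rightarrow> nat list \<Rightarrow> 'a ser" where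
  "Tser psihat yhat n J = ssum (\<lambda>(k, g). let bars = [n + 1..<n + 1 + k] in
       sscale (1 / fact k)
         (sshiftH (2 * int g - 2 + int k + int (length J))
           (fold ssubst bars (fold opSig bars
              (Wser psihat yhat g (bars @ J) (\<not> (k = 2 \<and> J = [])))))))
     {(k, g). 1 \<le> k}"

text \<open>calT_n(z_1; z_2..z_n; u). Ordered decompositions J_1,...,J_l of {2..n} (parts possibly
  empty) are encoded by assignment lists as (position j-2 holds the index of the part of j).\<close>
definition TT :: "(nat \<Rightarrow> nat \<Rightarrow> 'a::field_char_0) \<Rightarrow> (nat \<Rightarrow> nat \<Rightarrow> 'a) \<Rightarrow> nat \<Rightarrow> 'a ser" where
  "TT psihat yhat n = sprod sinvS (opS1 (ssum (\<lambda>(l, as).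
       sscale (1 / fact l)
         (foldr sprod (map (\<lambda>i. Tser psihat yhat n (filter (\<lambda>j. as ! (j - 2) = i) [2..<n + 1]))
                          [1..<l + 1]) sone))
     {(l, as). 1 \<le> l \<and> length as = n - 1 \<and> set as \<subseteq> {1..l}}))"

end

theory Submission
  imports Defs
begin

text \<open>
  Every T_{|J|+1} has u-order at least one, since its k-th summand carries k factors
  u hbar S(u hbar D). Hence in calT_n the prefactor S(u hbar D_1)/(hbar S(u hbar)) contributes
  only its constant term 1/hbar to the coefficient of u^2, and only products of at most two
  factors T survive. A single factor contributes its k = 2 summand: identifying both auxiliary
  variables with z_1 gives W_{g-1,n+1}(z_1, z_1, z_2, ..., z_n) / 2!. A product of two factors
  contributes the product of their u^1-coefficients, the k = 1 summands W_{g_i,|J_i|+1}(z_1, z_{J_i}),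
  with weight 1/2!; ordered decompositions of {2..n} into two parts are the subsets I. The
  identity holds for arbitrary coefficients of W, so the normalisations of psihat and yhat at 0
  are not needed.
\<close>

section \<open>Series graded by the order in u\<close>

definition u_order_ge :: "'a::comm_ring_1 ser \<Rightarrow> nat \<Rightarrow> bool" where
  "u_order_ge F m \<longleftrightarrow> (\<forall>h e x. e < m \<longrightarrow> F h e x = 0)"

lemma u_order_geD: "u_order_ge F m \<Longrightarrow> e < m \<Longrightarrow> F h e x = 0"
  by (simp add: u_order_ge_def)

lemma u_order_ge_0 [simp]: "u_order_ge F 0"
  by (simp add: u_order_ge_def)

lemma u_order_ge_mono: "u_order_ge F m \<Longrightarrow> k \<le> m \<Longrightarrow> u_order_ge F k"
  by (simp add: u_order_ge_def)

lemma u_order_ge_ssum: "(\<And>i. i \<in> I \<Longrightarrow> u_order_ge (F i) m) \<Longrightarrow> u_order_ge (ssum F I) m"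
  by (auto simp: u_order_ge_def ssum_def)

lemma u_order_ge_sscale: "u_order_ge F m \<Longrightarrow> u_order_ge (sscale c F) m"
  by (simp add: u_order_ge_def sscale_def)

lemma u_order_ge_sshiftH: "u_order_ge F m \<Longrightarrow> u_order_ge (sshiftH d F) m"
  by (simp add: u_order_ge_def sshiftH_def)

lemma u_order_ge_fold_ssubst: "u_order_ge F m \<Longrightarrow> u_order_ge (fold ssubst vs F) m"
  by (induction vs arbitrary: F) (auto simp: u_order_ge_def ssubst_def)

lemma u_order_ge_opSig: "u_order_ge F m \<Longrightarrow> u_order_ge (opSig v F) (Suc m)"
  by (auto simp: u_order_ge_def opSig_def intro!: sum.neutral)

lemma u_order_ge_fold_opSig: "u_order_ge F m \<Longrightarrow> u_order_ge (fold opSig vs F) (m + length vs)"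
proof (induction vs arbitrary: F m)
  case (Cons v vs)
  from Cons.IH[OF u_order_ge_opSig[OF Cons.prems]] show ?case by simp
qed simp

definition splittings :: "int \<Rightarrow> nat \<Rightarrow> (nat \<Rightarrow> int) \<Rightarrow>
    ((int \<times> nat \<times> (nat \<Rightarrow> int)) \<times> (int \<times> nat \<times> (nat \<Rightarrow> int))) set" where
  "splittings h e x = {((h1,e1,x1),(h2,e2,x2)). h1 + h2 = h \<and> e1 + e2 = e \<and> (\<forall>i. x1 i + x2 i = x i)}"

definition sprod_support :: "'a::comm_ring_1 ser \<Rightarrow> 'a ser \<Rightarrow> int \<Rightarrow> nat \<Rightarrow> (nat \<Rightarrow> int) \<Rightarrow>
    ((int \<times> nat \<times> (nat \<Rightarrow> int)) \<times> (int \<times> nat \<times> (nat \<Rightarrow> int))) set" where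
  "sprod_support F G h e x = {((h1,e1,x1),(h2,e2,x2)). h1 + h2 = h \<and> e1 + e2 = e \<and>
     (\<forall>i. x1 i + x2 i = x i) \<and> F h1 e1 x1 \<noteq> 0 \<and> G h2 e2 x2 \<noteq> 0}"

lemma mem_sprod_support:
  "((h1,e1,x1),(h2,e2,x2)) \<in> sprod_support F G h e x \<longleftrightarrow>
     ((h1,e1,x1),(h2,e2,x2)) \<in> splittings h e x \<and> F h1 e1 x1 \<noteq> 0 \<and> G h2 e2 x2 \<noteq> 0"
  by (simp add: sprod_support_def splittings_def)

lemma sprod_eq_sum_support: "sprod F G h e x =
    (\<Sum>q\<in>sprod_support F G h e x. case q of ((h1,e1,x1),(h2,e2,x2)) \<Rightarrow> F h1 e1 x1 * G h2 e2 x2)"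
  unfolding sprod_def sprod_support_def ..

lemma u_order_ge_sprod:
  assumes "u_order_ge F a" "u_order_ge G b"
  shows "u_order_ge (sprod F G) (a + b)"
proof -
  have "sprod_support F G h e x = {}" if "e < a + b" for h e x
  proof -
    have "F h1 e1 x1 = 0 \<or> G h2 e2 x2 = 0" if "e1 + e2 = e" for h1 e1 x1 h2 e2 x2
    proof (cases "e1 < a")
      case False
      then have "e2 < b" using that \<open>e < a + b\<close> by linarith
      then show ?thesis using u_order_geD[OF assms(2)] by blast
    qed (use u_order_geD[OF assms(1)] in blast)
    then show ?thesis by (auto simp: sprod_support_def)
  qed
  then show ?thesis
    by (simp add: u_order_ge_def sprod_eq_sum_support)
qed

lemma u_order_ge_foldr_sprod:
  "(\<And>F. F \<in> set Fs \<Longrightarrow> u_order_ge F 1) \<Longrightarrow> u_order_ge (foldr sprod Fs sone) (length Fs)"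
proof (induction Fs)
  case Nil
  then show ?case by (simp add: u_order_ge_def)
next
  case (Cons F Fs)
  then have "u_order_ge (sprod F (foldr sprod Fs sone)) (1 + length Fs)"
    by (intro u_order_ge_sprod) auto
  then show ?case by simp
qed

lemma sprod_sone: "sprod F sone = F"
proof (intro ext)
  fix h e x
  have "sprod_support F sone h e x = (if F h e x = 0 then {} else {((h,e,x),(0,0,\<lambda>_. 0))})"
  proof -
    have "((h1,e1,x1),(h2,e2,x2)) \<in> sprod_support F sone h e x \<longleftrightarrow>
        F h e x \<noteq> 0 \<and> (h1,e1,x1) = (h,e,x) \<and> (h2,e2,x2) = (0,0,\<lambda>_. 0)" for h1 e1 x1 h2 e2 x2
      by (auto simp: sprod_support_def sone_def fun_eq_iff[symmetric] split: if_splits)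
    then show ?thesis by auto
  qed
  then show "sprod F sone h e x = F h e x"
    by (simp add: sprod_eq_sum_support sone_def)
qed

lemma sprod_eq_sum_cover:
  fixes F G :: "'a::comm_ring_1 ser"
  assumes "finite M" "inj_on p M" "p ` M \<subseteq> splittings h e x"
    and "sprod_support F G h e x \<subseteq> p ` M"
  shows "sprod F G h e x =
    (\<Sum>m\<in>M. case p m of ((h1,e1,x1),(h2,e2,x2)) \<Rightarrow> F h1 e1 x1 * G h2 e2 x2)"
proof -
  let ?t = "\<lambda>q. case q of ((h1,e1,x1),(h2,e2,x2)) \<Rightarrow> F h1 e1 x1 * G h2 e2 x2"
  have "?t q = 0" if "q \<in> p ` M - sprod_support F G h e x" for q
  proof -
    have "q \<in> splittings h e x" "q \<notin> sprod_support F G h e x" using that assms(3) by auto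
    then show ?thesis by (cases q) (auto simp: mem_sprod_support)
  qed
  then have "sum ?t (sprod_support F G h e x) = sum ?t (p ` M)"
    using assms(1,4) by (intro sum.mono_neutral_left) auto
  then show ?thesis
    by (simp add: sprod_eq_sum_support sum.reindex[OF assms(2)])
qed

definition nonzero_splittings :: "'a::comm_ring_1 ser \<Rightarrow> 'a ser \<Rightarrow> (nat \<Rightarrow> int) \<Rightarrow>
    ((nat \<Rightarrow> int) \<times> (nat \<Rightarrow> int)) set" where
  "nonzero_splittings F G x = {(z1, z2). (\<forall>i. z1 i + z2 i = x i) \<and> F 0 0 z1 \<noteq> 0 \<and> G 0 0 z2 \<noteq> 0}"

lemma sprod_eq_sum_nonzero_splittings:
  fixes F G :: "'a::comm_ring_1 ser"
  assumes "finite (nonzero_splittings F G x)"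
    and "\<And>h e z. F h e z \<noteq> 0 \<Longrightarrow> h = 0 \<and> e = 0" "\<And>h e z. G h e z \<noteq> 0 \<Longrightarrow> h = 0 \<and> e = 0"
  shows "sprod F G 0 0 x = (\<Sum>(z1, z2)\<in>nonzero_splittings F G x. F 0 0 z1 * G 0 0 z2)"
proof -
  let ?p = "\<lambda>(z1, z2). (((0::int), (0::nat), z1), ((0::int), (0::nat), z2))"
  have "sprod F G 0 0 x = (\<Sum>z\<in>nonzero_splittings F G x.
      case ?p z of ((h1,e1,x1),(h2,e2,x2)) \<Rightarrow> F h1 e1 x1 * G h2 e2 x2)"
  proof (rule sprod_eq_sum_cover[OF assms(1)])
    show "sprod_support F G 0 0 x \<subseteq> ?p ` nonzero_splittings F G x"
    proof
      fix q assume q: "q \<in> sprod_support F G 0 0 x"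
      obtain h1 e1 z1 h2 e2 z2 where qq: "q = ((h1,e1,z1),(h2,e2,z2))" by (cases q) auto
      from q have F: "F h1 e1 z1 \<noteq> 0" and G: "G h2 e2 z2 \<noteq> 0"
        and "((h1,e1,z1),(h2,e2,z2)) \<in> splittings 0 0 x"
        unfolding qq mem_sprod_support by blast+
      then have "\<forall>i. z1 i + z2 i = x i"
        by (simp add: splittings_def)
      with F G assms(2)[OF F] assms(3)[OF G] show "q \<in> ?p ` nonzero_splittings F G x"
        unfolding qq nonzero_splittings_def by (auto intro!: image_eqI[where x = "(z1, z2)"])
    qed
  qed (auto simp: inj_on_def splittings_def nonzero_splittings_def)
  then show ?thesis
    by (simp add: case_prod_beta)
qed

lemma ssum_eq_sum:
  assumes "finite A" "A \<subseteq> I" "\<And>i. i \<in> I \<Longrightarrow> F i h e x \<noteq> 0 \<Longrightarrow> i \<in> A"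
  shows "ssum F I h e x = (\<Sum>i\<in>A. F i h e x)"
  unfolding ssum_def using assms by (intro sum.mono_neutral_left) auto

lemma ssum_eq_single:
  assumes "c \<in> I" "\<And>i. i \<in> I \<Longrightarrow> F i h e x \<noteq> 0 \<Longrightarrow> i = c"
  shows "ssum F I h e x = F c h e x"
  using ssum_eq_sum[of "{c}" I F h e x] assms by simp

lemma ssum_nonzero_imp: "ssum F I h e x \<noteq> 0 \<Longrightarrow> \<exists>i\<in>I. F i h e x \<noteq> 0"
  unfolding ssum_def by (force intro: sum.neutral)

lemma ssubst_cong_slice:
  "(\<And>z. F h e z = G h' e' z) \<Longrightarrow> ssubst v F h e x = ssubst v G h' e' x"
  by (simp add: ssubst_def)

lemma opSig_u1: "opSig v F h (Suc 0) x = F (h - 1) 0 x"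
  by (simp add: opSig_def Sco_def)

lemma opSig_u2: "opSig v F h 2 x = F (h - 1) 1 x"
  by (simp add: opSig_def numeral_2_eq_2 Sco_def)

text \<open>1/(hbar S(u hbar)) and S(u hbar D_1) are even in u with constant terms 1/hbar and 1, so
  against a series of u-order at least one only these constant terms reach u^2.\<close>

lemma sprod_sinvS_opS1_u2:
  fixes G :: "'a::field_char_0 ser"
  assumes "u_order_ge G 1"
  shows "sprod sinvS (opS1 G) h 2 x = G (h + 1) 2 x"
proof -
  let ?p = "\<lambda>e1::nat. ((int e1 - 1, e1, (\<lambda>_. 0::int)), (h - int e1 + 1, 2 - e1, x))"
  have "sprod sinvS (opS1 G) h 2 x = (\<Sum>e1\<in>{0,1,2}. sinvS (int e1 - 1) e1 (\<lambda>_. 0) *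
      opS1 G (h - int e1 + 1) (2 - e1) x)"
  proof (subst sprod_eq_sum_cover)
    show "sprod_support sinvS (opS1 G) h 2 x \<subseteq> ?p ` {0,1,2}"
    proof
      fix q assume q: "q \<in> sprod_support sinvS (opS1 G) h 2 x"
      obtain h1 e1 x1 h2 e2 x2 where qq: "q = ((h1,e1,x1),(h2,e2,x2))" by (cases q) auto
      from q[unfolded qq] have "x1 = (\<lambda>_. 0)" "h1 = int e1 - 1" "e1 \<le> 2" "e2 = 2 - e1"
          "h2 = h - int e1 + 1" "x2 = x"
        by (auto simp: sprod_support_def sinvS_def split: if_splits)
      then show "q \<in> ?p ` {0,1,2}" unfolding qq by auto
    qed
  qed (auto simp: inj_on_def splittings_def)
  also have "\<dots> = opS1 G (h + 1) 2 x + sinvS 1 2 (\<lambda>_. 0) * opS1 G (h - 1) 0 x"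
    by (simp add: sinvS_def Sfps_def fps_inverse_def Sco_def)
  also have "\<dots> = G (h + 1) 2 x"
    using u_order_geD[OF assms] by (simp add: opS1_def numeral_2_eq_2 Sco_def)
  finally show ?thesis .
qed

section \<open>Ordered decompositions into two parts\<close>

definition assignments :: "nat \<Rightarrow> nat \<Rightarrow> nat list set" where
  "assignments n l = {as. set as \<subseteq> {1..l} \<and> length as = n - 1}"

lemma finite_assignments: "finite (assignments n l)"
  unfolding assignments_def by (rule finite_lists_length_eq) simp

lemma assignments_1: "assignments n 1 = {replicate (n - 1) 1}"
  unfolding assignments_def by (auto intro!: replicate_eqI)

lemma sorted_list_of_set_filter_upt: "sorted_list_of_set {j \<in> {a..<b}. P j} = filter P [a..<b]"
proof -
  have set: "{j \<in> {a..<b}. P j} = set (filter P [a..<b])"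
    by auto
  have "sorted (filter P [a..<b])" "distinct (filter P [a..<b])"
    by (simp_all add: sorted_wrt_filter)
  then show ?thesis
    unfolding set by (simp only: sorted_list_of_set_sort_remdups distinct_remdups_id sorted_sort_id)
qed

definition two_colouring :: "nat \<Rightarrow> nat set \<Rightarrow> nat list" where
  "two_colouring n I = map (\<lambda>j. if j \<in> I then 1 else 2) [2..<n + 1]"

lemma two_colouring_nth:
  assumes "j \<in> {2..n}"
  shows "two_colouring n I ! (j - 2) = (if j \<in> I then 1 else 2)"
proof -
  have "[2..<n + 1] ! (j - 2) = j"
    using assms by (subst nth_upt) auto
  moreover have "two_colouring n I ! (j - 2) = (if [2..<n + 1] ! (j - 2) \<in> I then 1 else 2)"
    unfolding two_colouring_def by (rule nth_map) (use assms in auto)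
  ultimately show ?thesis
    by simp
qed

lemma bij_betw_two_colouring: "bij_betw (two_colouring n) (Pow {2..n}) (assignments n 2)"
proof (rule bij_betwI')
  fix I I' assume I: "I \<in> Pow {2..n}" and I': "I' \<in> Pow {2..n}"
  have "j \<in> I \<longleftrightarrow> j \<in> I'" if "two_colouring n I = two_colouring n I'" "j \<in> {2..n}" for j
  proof -
    have "(if j \<in> I then 1 else 2 :: nat) = (if j \<in> I' then 1 else 2)"
      using that two_colouring_nth[OF that(2)] by metis
    then show ?thesis
      by (simp split: if_splits)
  qed
  then show "(two_colouring n I = two_colouring n I') = (I = I')"
    using I I' by blast
next
  fix I show "two_colouring n I \<in> assignments n 2"
    by (auto simp: two_colouring_def assignments_def)
next
  fix as assume as: "as \<in> assignments n 2"
  have "as = two_colouring n {j \<in> {2..n}. as ! (j - 2) = 1}"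
  proof (rule nth_equalityI)
    show "length as = length (two_colouring n {j \<in> {2..n}. as ! (j - 2) = 1})"
      using as by (simp add: assignments_def two_colouring_def del: upt_Suc)
  next
    fix k assume k_as: "k < length as"
    then have k: "k + 2 \<in> {2..n}"
      using as by (auto simp: assignments_def)
    have "as ! k \<in> {1..2}"
      using nth_mem[OF k_as] as by (auto simp: assignments_def)
    then show "as ! k = two_colouring n {j \<in> {2..n}. as ! (j - 2) = 1} ! k"
      using two_colouring_nth[OF k] k by auto
  qed
  then show "\<exists>I \<in> Pow {2..n}. as = two_colouring n I"
    by blast
qed

lemma filter_two_colouring:
  "filter (\<lambda>j. two_colouring n I ! (j - 2) = c) [2..<n + 1] =
    sorted_list_of_set {j \<in> {2..n}. (if j \<in> I then 1 else 2) = c}"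
proof -
  have "filter (\<lambda>j. two_colouring n I ! (j - 2) = c) [2..<n + 1] =
      filter (\<lambda>j. (if j \<in> I then 1 else 2) = c) [2..<n + 1]"
    by (rule filter_cong[OF refl]) (simp add: two_colouring_nth del: upt_Suc)
  also have "\<dots> = sorted_list_of_set {j \<in> {2..<n + 1}. (if j \<in> I then 1 else 2) = c}"
    by (rule sorted_list_of_set_filter_upt[symmetric])
  also have "{2..<n + 1} = {2..n}"
    by auto
  finally show ?thesis .
qed

lemma sum_assignments_2:
  "(\<Sum>as\<in>assignments n 2.
      f (filter (\<lambda>j. as ! (j - 2) = 1) [2..<n + 1]) (filter (\<lambda>j. as ! (j - 2) = 2) [2..<n + 1])) =
    (\<Sum>I\<in>Pow {2..n}. f (sorted_list_of_set I) (sorted_list_of_set ({2..n} - I)))"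
  unfolding sum.reindex_bij_betw[OF bij_betw_two_colouring, symmetric]
proof (rule sum.cong[OF refl])
  fix I assume "I \<in> Pow {2..n}"
  then have "{j \<in> {2..n}. (if j \<in> I then 1 else 2) = (1::nat)} = I"
    "{j \<in> {2..n}. (if j \<in> I then 1 else 2) = (2::nat)} = {2..n} - I"
    by auto
  then show "f (filter (\<lambda>j. two_colouring n I ! (j - 2) = 1) [2..<n + 1])
      (filter (\<lambda>j. two_colouring n I ! (j - 2) = 2) [2..<n + 1]) =
    f (sorted_list_of_set I) (sorted_list_of_set ({2..n} - I))"
    unfolding filter_two_colouring by (simp only:)
qed

lemma expvec_notin: "i \<notin> set vs \<Longrightarrow> expvec vs a i = 0"
  unfolding expvec_def by (auto intro!: sum.neutral)

lemma expvec_Cons: "expvec (v # vs) (c # a) = (\<lambda>i. (if v = i then c else 0) + expvec vs a i)"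
  unfolding expvec_def length_Cons sum.lessThan_Suc_shift
  by (rule ext) (simp, rule sum.cong, simp_all)

lemma expvec_eq_iff:
  assumes "distinct vs" "length a = length vs"
  shows "expvec vs a = x \<longleftrightarrow> a = map x vs \<and> (\<forall>i. i \<notin> set vs \<longrightarrow> x i = 0)"
  using assms
proof (induction vs arbitrary: a x)
  case Nil
  then show ?case by (auto simp: expvec_def)
next
  case (Cons v vs)
  obtain c a' where a: "a = c # a'" using Cons.prems by (cases a) auto
  have v: "expvec vs a' v = 0" using Cons.prems by (simp add: expvec_notin)
  have "expvec (v # vs) a = x \<longleftrightarrow> c = x v \<and> expvec vs a' = x(v := 0)"
  proof
    assume "expvec (v # vs) a = x"
    then have x: "x i = (if v = i then c else 0) + expvec vs a' i" for i
      unfolding a expvec_Cons by auto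
    show "c = x v \<and> expvec vs a' = x(v := 0)"
      using v by (auto simp: fun_eq_iff x)
  next
    assume "c = x v \<and> expvec vs a' = x(v := 0)"
    then show "expvec (v # vs) a = x"
      unfolding a expvec_Cons using v by (auto simp: fun_eq_iff)
  qed
  also have "\<dots> \<longleftrightarrow> c = x v \<and> a' = map x vs \<and> (\<forall>i. i \<notin> set vs \<longrightarrow> (x(v := 0)) i = 0)"
    using Cons a by auto
  finally show ?case using Cons.prems unfolding a by auto
qed

lemma expvec_rename:
  assumes "v \<noteq> 1"
  shows "expvec (map (\<lambda>i. if i = v then 1 else i) vs) a =
    (expvec vs a)(1 := expvec vs a 1 + expvec vs a v, v := 0)"
proof (rule ext)
  fix i
  show "expvec (map (\<lambda>i. if i = v then 1 else i) vs) a i =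
    ((expvec vs a)(1 := expvec vs a 1 + expvec vs a v, v := 0)) i"
    using assms unfolding expvec_def
    by (cases "i = v"; cases "i = 1") (auto simp: sum.distrib[symmetric] intro!: sum.cong sum.neutral)
qed

context
  fixes psihat yhat :: "nat \<Rightarrow> nat \<Rightarrow> 'a::field_char_0"
begin

lemma Wser_eq_sum: "Wser psihat yhat g vs s h e x = (if h = 0 \<and> e = 0 then
    (\<Sum>a | length a = length vs \<and> expvec vs a = x \<and> Wc psihat yhat g a s \<noteq> 0. Wc psihat yhat g a s)
  else 0)"
  unfolding Wser_def ssum_def by (auto intro!: sum.cong)

lemma Wser_nonzero_imp: "Wser psihat yhat g vs s h e x \<noteq> 0 \<Longrightarrow> h = 0 \<and> e = 0"
  by (auto simp: Wser_eq_sum split: if_splits)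

lemma Wser_distinct:
  assumes "distinct vs"
  shows "Wser psihat yhat g vs s 0 0 x =
    (if \<forall>i. i \<notin> set vs \<longrightarrow> x i = 0 then Wc psihat yhat g (map x vs) s else 0)"
proof -
  have "{a. length a = length vs \<and> expvec vs a = x \<and> Wc psihat yhat g a s \<noteq> 0} =
      (if (\<forall>i. i \<notin> set vs \<longrightarrow> x i = 0) \<and> Wc psihat yhat g (map x vs) s \<noteq> 0 then {map x vs} else {})"
  proof -
    have "length a = length vs \<and> expvec vs a = x \<longleftrightarrow> a = map x vs \<and> (\<forall>i. i \<notin> set vs \<longrightarrow> x i = 0)" for a
      using expvec_eq_iff[OF assms, of a x] by auto
    then have "{a. length a = length vs \<and> expvec vs a = x \<and> Wc psihat yhat g a s \<noteq> 0} =
        {a. a = map x vs \<and> (\<forall>i. i \<notin> set vs \<longrightarrow> x i = 0) \<and> Wc psihat yhat g a s \<noteq> 0}"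
      by blast
    then show ?thesis by auto
  qed
  then show ?thesis by (auto simp: Wser_eq_sum)
qed

lemma Wser_singular_irrelevant:
  "length vs \<noteq> 2 \<Longrightarrow> Wser psihat yhat g vs s = Wser psihat yhat g vs s'"
  by (intro ext) (auto simp: Wser_eq_sum Wc_def intro!: sum.cong)

lemma Wc_Cons_pos: "Wc psihat yhat g (c # a) s \<noteq> 0 \<Longrightarrow> 1 \<le> c"
  unfolding Wc_def by (auto split: if_splits)

lemma Wser_Cons_nonzero_imp:
  assumes "distinct (v # vs)" "Wser psihat yhat g (v # vs) s 0 0 z \<noteq> 0"
  shows "\<forall>i. i \<notin> set (v # vs) \<longrightarrow> z i = 0" and "1 \<le> z v"
proof -
  let ?S = "\<forall>i. i \<notin> set (v # vs) \<longrightarrow> z i = 0"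
  from assms(2) have "(if ?S then Wc psihat yhat g (map z (v # vs)) s else 0) \<noteq> 0"
    unfolding Wser_distinct[OF assms(1)] .
  then have S: ?S and nz: "Wc psihat yhat g (z v # map z vs) s \<noteq> 0"
    by (auto split: if_splits)
  show ?S by (fact S)
  show "1 \<le> z v" using nz by (rule Wc_Cons_pos)
qed

lemma sum_Wser_substituted:
  assumes "distinct vs" "v \<in> set vs" "v \<noteq> 1" "x v = 0"
  shows "(\<Sum>t | Wser psihat yhat g vs s 0 0 (x(1 := x 1 - t, v := t)) \<noteq> 0.
      Wser psihat yhat g vs s 0 0 (x(1 := x 1 - t, v := t))) =
    Wser psihat yhat g (map (\<lambda>i. if i = v then 1 else i) vs) s 0 0 x"
proof -
  let ?vs' = "map (\<lambda>i. if i = v then 1 else i) vs"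
  let ?x = "\<lambda>t. x(1 := x 1 - t, v := t)"
  let ?W = "Wser psihat yhat g vs s 0 0" and ?Wc = "\<lambda>a. Wc psihat yhat g a s"
  have "(\<Sum>t | ?W (?x t) \<noteq> 0. ?W (?x t)) = (\<Sum>a | length a = length ?vs' \<and> expvec ?vs' a = x \<and> ?Wc a \<noteq> 0. ?Wc a)"
  proof (rule sum.reindex_bij_witness[where i = "\<lambda>a. expvec vs a v" and j = "\<lambda>t. map (?x t) vs"])
    fix t assume "t \<in> {t. ?W (?x t) \<noteq> 0}"
    then have "(if \<forall>i. i \<notin> set vs \<longrightarrow> ?x t i = 0 then ?Wc (map (?x t) vs) else 0) \<noteq> 0"
      unfolding Wser_distinct[OF assms(1)] by simp
    then have supp: "\<forall>i. i \<notin> set vs \<longrightarrow> ?x t i = 0" and nz: "?Wc (map (?x t) vs) \<noteq> 0"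
      by meson+
    have ex: "expvec vs (map (?x t) vs) = ?x t"
      using expvec_eq_iff[OF assms(1), of "map (?x t) vs" "?x t"] supp by simp
    then show "expvec vs (map (?x t) vs) v = t" by simp
    have "expvec ?vs' (map (?x t) vs) = x"
      using assms(3,4) unfolding expvec_rename[OF assms(3)] ex by (auto simp: fun_eq_iff)
    then show "map (?x t) vs \<in> {a. length a = length ?vs' \<and> expvec ?vs' a = x \<and> ?Wc a \<noteq> 0}"
      using nz by simp
    show "?Wc (map (?x t) vs) = ?W (?x t)"
      using supp by (simp add: Wser_distinct[OF assms(1)])
  next
    fix a assume a: "a \<in> {a. length a = length ?vs' \<and> expvec ?vs' a = x \<and> ?Wc a \<noteq> 0}"
    define y where "y = expvec vs a"
    have "x = y(1 := y 1 + y v, v := 0)"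
      using a assms(3) by (simp add: expvec_rename y_def)
    then have yx: "?x (y v) = y"
      using assms(3) by (auto simp: fun_eq_iff)
    have ay: "a = map y vs" and supp: "\<forall>i. i \<notin> set vs \<longrightarrow> y i = 0"
      using a expvec_eq_iff[OF assms(1), of a y] by (auto simp: y_def)
    have t: "expvec vs a v = y v" by (simp add: y_def)
    show "map (?x (expvec vs a v)) vs = a"
      unfolding t yx using ay by simp
    have "?W y \<noteq> 0"
      using a ay supp by (simp add: Wser_distinct[OF assms(1)])
    then show "expvec vs a v \<in> {t. ?W (?x t) \<noteq> 0}"
      unfolding t mem_Collect_eq yx .
  qed
  then show ?thesis
    by (simp add: Wser_eq_sum)
qed

lemma ssubst_Wser:
  assumes "distinct vs" "v \<in> set vs" "v \<noteq> 1"
  shows "ssubst v (Wser psihat yhat g vs s) = Wser psihat yhat g (map (\<lambda>i. if i = v then 1 else i) vs) s"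
proof (intro ext)
  fix h :: int and e :: nat and x :: "nat \<Rightarrow> int"
  let ?vs' = "map (\<lambda>i. if i = v then 1 else i) vs"
  show "ssubst v (Wser psihat yhat g vs s) h e x = Wser psihat yhat g ?vs' s h e x"
  proof (cases "h = 0 \<and> e = 0 \<and> x v = 0")
    case True
    then show ?thesis
      using sum_Wser_substituted[OF assms] by (simp add: ssubst_def)
  next
    case False
    have "v \<notin> set ?vs'"
      using assms(3) by auto
    then have "expvec ?vs' a \<noteq> x" if "h = 0" "e = 0" for a
      using that False expvec_notin by fastforce
    then show ?thesis
      using False by (auto simp: ssubst_def Wser_eq_sum)
  qed
qed

lemma ssubst_Wser_append:
  assumes "distinct (us @ v # vs)" "v \<noteq> 1"
  shows "ssubst v (Wser psihat yhat g (us @ v # vs) s) = Wser psihat yhat g (us @ 1 # vs) s"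
proof -
  have "map (\<lambda>i. if i = v then 1 else i) (us @ v # vs) = us @ 1 # vs"
    using assms(1) by (auto intro!: map_idI)
  then show ?thesis
    using ssubst_Wser[OF assms(1) _ assms(2)] by simp
qed

lemma finite_nonzero_splittings_Wser:
  assumes "distinct J1" "distinct J2" "1 \<notin> set J1" "1 \<notin> set J2" "set J1 \<inter> set J2 = {}"
  shows "finite (nonzero_splittings (Wser psihat yhat g1 (1 # J1) s1) (Wser psihat yhat g2 (1 # J2) s2) x)"
proof -
  let ?z = "\<lambda>J m i. if i = 1 then m else if i \<in> set J then x i else 0"
  have "nonzero_splittings (Wser psihat yhat g1 (1 # J1) s1) (Wser psihat yhat g2 (1 # J2) s2) x \<subseteq>
      (\<lambda>m. (?z J1 m, ?z J2 (x 1 - m))) ` {1..x 1 - 1}"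
  proof safe
    fix z1 z2
    assume "(z1, z2) \<in> nonzero_splittings (Wser psihat yhat g1 (1 # J1) s1) (Wser psihat yhat g2 (1 # J2) s2) x"
    then have sum: "\<And>i. z1 i + z2 i = x i"
      and nz1: "Wser psihat yhat g1 (1 # J1) s1 0 0 z1 \<noteq> 0" and nz2: "Wser psihat yhat g2 (1 # J2) s2 0 0 z2 \<noteq> 0"
      by (auto simp: nonzero_splittings_def)
    have d: "distinct (1 # J1)" "distinct (1 # J2)"
      using assms by simp_all
    note W1 = Wser_Cons_nonzero_imp[OF d(1) nz1] and W2 = Wser_Cons_nonzero_imp[OF d(2) nz2]
    define m where "m = z1 1"
    have "z1 i = ?z J1 m i \<and> z2 i = ?z J2 (x 1 - m) i" for i
    proof -
      consider "i = 1" | "i \<in> set J1" | "i \<in> set J2" | "i \<notin> set (1 # J1 @ J2)"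
        by auto
      then show ?thesis
      proof cases
        case 1
        then show ?thesis using sum[of 1] by (simp add: m_def)
      next
        case 2
        then show ?thesis using W2(1) sum[of i] assms(3,5) by auto
      next
        case 3
        then show ?thesis using W1(1) sum[of i] assms(4,5) by auto
      next
        case 4
        then show ?thesis using W1(1) W2(1) by auto
      qed
    qed
    then have "(z1, z2) = (?z J1 m, ?z J2 (x 1 - m))"
      by (simp add: fun_eq_iff)
    moreover have "m \<in> {1..x 1 - 1}"
      using W1(2) W2(2) sum[of 1] by (auto simp: m_def)
    ultimately show "(z1, z2) \<in> (\<lambda>m. (?z J1 m, ?z J2 (x 1 - m))) ` {1..x 1 - 1}"
      by blast
  qed
  then show ?thesis
    by (rule finite_subset) simp
qed

section \<open>The u-expansion of T\<close>

definition Tser_term :: "nat \<Rightarrow> nat list \<Rightarrow> nat \<times> nat \<Rightarrow> 'a ser" where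
  "Tser_term n J = (\<lambda>(k, g). let bars = [n + 1..<n + 1 + k] in
     sscale (1 / fact k) (sshiftH (2 * int g - 2 + int k + int (length J))
       (fold ssubst bars (fold opSig bars (Wser psihat yhat g (bars @ J) (\<not> (k = 2 \<and> J = [])))))))"

lemma Tser_eq_ssum: "Tser psihat yhat n J = ssum (Tser_term n J) {(k, g). 1 \<le> k}"
  unfolding Tser_def Tser_term_def ..

lemma u_order_ge_Tser_term: "u_order_ge (Tser_term n J (k, g)) k"
proof -
  have "u_order_ge (fold opSig [n + 1..<n + 1 + k] W) k" for W :: "'a ser"
    using u_order_ge_fold_opSig[of W 0 "[n + 1..<n + 1 + k]"] by (simp del: upt_Suc)
  then show ?thesis
    unfolding Tser_term_def Let_def split
    by (intro u_order_ge_sscale u_order_ge_sshiftH u_order_ge_fold_ssubst)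
qed

lemma u_order_ge_Tser: "u_order_ge (Tser psihat yhat n J) 1"
  unfolding Tser_eq_ssum
  by (rule u_order_ge_ssum) (auto intro: u_order_ge_mono[OF u_order_ge_Tser_term])

lemma ssubst_bars_Wser:
  assumes "1 \<le> n" "set J \<subseteq> {2..n}" "distinct J"
  shows "ssubst (n + 1) (Wser psihat yhat g ((n + 1) # J) s) = Wser psihat yhat g (1 # J) s"
    and "ssubst (n + 1) (Wser psihat yhat g ((n + 1) # (n + 2) # J) s) = Wser psihat yhat g (1 # (n + 2) # J) s"
    and "ssubst (n + 2) (Wser psihat yhat g (1 # (n + 2) # J) s) = Wser psihat yhat g (1 # 1 # J) s"
proof -
  have "n + 1 \<notin> set J" "n + 2 \<notin> set J" "1 \<notin> set J"
    using assms(2) by auto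
  then show "ssubst (n + 1) (Wser psihat yhat g ((n + 1) # J) s) = Wser psihat yhat g (1 # J) s"
    and "ssubst (n + 1) (Wser psihat yhat g ((n + 1) # (n + 2) # J) s) = Wser psihat yhat g (1 # (n + 2) # J) s"
    and "ssubst (n + 2) (Wser psihat yhat g (1 # (n + 2) # J) s) = Wser psihat yhat g (1 # 1 # J) s"
    using ssubst_Wser_append[of "[]" "n + 1" J] ssubst_Wser_append[of "[]" "n + 1" "(n + 2) # J"]
      ssubst_Wser_append[of "[1]" "n + 2" J] assms(1,3) by auto
qed

lemma Tser_u0: "Tser psihat yhat n J h 0 x = 0"
  by (rule u_order_geD[OF u_order_ge_Tser]) simp

lemma Tser_term_u1:
  assumes "1 \<le> n" "set J \<subseteq> {2..n}" "distinct J" "1 \<le> k"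
  shows "Tser_term n J (k, g) h (Suc 0) x =
    (if k = 1 then Wser psihat yhat g (1 # J) True (h - (2 * int g + int (length J))) 0 x else 0)"
proof (cases "k = 1")
  case True
  let ?W = "Wser psihat yhat g ((n + 1) # J) True"
  have "Tser_term n J (k, g) h (Suc 0) x =
      ssubst (n + 1) (opSig (n + 1) ?W) (h - (2 * int g - 1 + int (length J))) (Suc 0) x"
    by (simp add: Tser_term_def sscale_def sshiftH_def True)
  also have "\<dots> = ssubst (n + 1) ?W (h - (2 * int g + int (length J))) 0 x"
    by (rule ssubst_cong_slice) (simp add: opSig_u1 algebra_simps)
  also have "\<dots> = Wser psihat yhat g (1 # J) True (h - (2 * int g + int (length J))) 0 x"
    unfolding ssubst_bars_Wser(1)[OF assms(1-3)] ..
  finally show ?thesis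
    using True by simp
next
  case False
  then show ?thesis
    using u_order_geD[OF u_order_ge_Tser_term, of 1 k] assms(4) by simp
qed

lemma Tser_term_2_u2:
  assumes "1 \<le> n" "set J \<subseteq> {2..n}" "distinct J"
  shows "Tser_term n J (2, g) h 2 x =
    Wser psihat yhat g (1 # 1 # J) False (h - (2 * int g + int (length J) + 2)) 0 x / 2"
proof -
  let ?h = "h - (2 * int g + int (length J))"
  let ?W = "Wser psihat yhat g ((n + 1) # (n + 2) # J) (J \<noteq> [])"
  let ?S = "ssubst (n + 1) (opSig (n + 2) (opSig (n + 1) ?W))"
  have "[n + 1..<n + 1 + 2] = [n + 1, n + 2]"
    by (simp add: upt_rec)
  then have "Tser_term n J (2, g) h 2 x = ssubst (n + 2) ?S ?h 2 x / 2"
    by (simp add: Tser_term_def sscale_def sshiftH_def)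
  also have "ssubst (n + 2) ?S ?h 2 x = ssubst (n + 2) (Wser psihat yhat g (1 # (n + 2) # J) (J \<noteq> [])) (?h - 2) 0 x"
  proof (rule ssubst_cong_slice)
    fix z
    have "?S ?h 2 z = ssubst (n + 1) ?W (?h - 2) 0 z"
      by (rule ssubst_cong_slice) (simp add: opSig_u1 opSig_u2 algebra_simps)
    then show "?S ?h 2 z = Wser psihat yhat g (1 # (n + 2) # J) (J \<noteq> []) (?h - 2) 0 z"
      unfolding ssubst_bars_Wser(2)[OF assms] .
  qed
  also have "\<dots> = Wser psihat yhat g (1 # 1 # J) (J \<noteq> []) (?h - 2) 0 x"
    unfolding ssubst_bars_Wser(3)[OF assms] ..
  also have "\<dots> = Wser psihat yhat g (1 # 1 # J) False (?h - 2) 0 x"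
    using Wser_singular_irrelevant[of "1 # 1 # J" g "J \<noteq> []" False] by (cases "J = []") auto
  finally show ?thesis
    by (simp add: algebra_simps)
qed

lemma Tser_term_u2:
  assumes "1 \<le> n" "set J \<subseteq> {2..n}" "distinct J" "1 \<le> k"
  shows "Tser_term n J (k, g) h 2 x =
    (if k = 2 then Wser psihat yhat g (1 # 1 # J) False (h - (2 * int g + int (length J) + 2)) 0 x / 2
     else 0)"
proof -
  consider "k = 1" | "k = 2" | "2 < k"
    using assms(4) by linarith
  then show ?thesis
  proof cases
    case 1
    let ?W = "Wser psihat yhat g ((n + 1) # J) True"
    have "Tser_term n J (k, g) h 2 x =
        ssubst (n + 1) (opSig (n + 1) ?W) (h - (2 * int g - 1 + int (length J))) 2 x"
      by (simp add: Tser_term_def sscale_def sshiftH_def 1)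
    also have "\<dots> = ssubst (n + 1) ?W (h - (2 * int g + int (length J))) (Suc 0) x"
      by (rule ssubst_cong_slice) (simp add: opSig_u2 algebra_simps)
    also have "\<dots> = Wser psihat yhat g (1 # J) True (h - (2 * int g + int (length J))) (Suc 0) x"
      unfolding ssubst_bars_Wser(1)[OF assms(1-3)] ..
    also have "\<dots> = 0"
      using Wser_nonzero_imp by (metis Zero_not_Suc)
    finally show ?thesis
      using 1 by simp
  next
    case 2
    then show ?thesis
      using Tser_term_2_u2[OF assms(1-3)] by simp
  next
    case 3
    then show ?thesis
      using u_order_geD[OF u_order_ge_Tser_term, of 2 k] by simp
  qed
qed

lemma Tser_u1:
  assumes "1 \<le> n" "set J \<subseteq> {2..n}" "distinct J"
  shows "Tser psihat yhat n J (2 * int g + int (length J)) (Suc 0) x = Wser psihat yhat g (1 # J) True 0 0 x"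
proof -
  let ?h = "2 * int g + int (length J)"
  have unique: "i = (1, g)" if mem: "i \<in> {(k, g). 1 \<le> k}" and nz_i: "Tser_term n J i ?h (Suc 0) x \<noteq> 0" for i
  proof -
    obtain k g' where i: "i = (k, g')" "1 \<le> k" using mem by auto
    from nz_i have k: "k = 1"
      and nz: "Wser psihat yhat g' (1 # J) True (?h - (2 * int g' + int (length J))) 0 x \<noteq> 0"
      by (simp_all add: i Tser_term_u1[OF assms i(2)] split: if_splits)
    show ?thesis
      using Wser_nonzero_imp[OF nz] i k by simp
  qed
  have "Tser psihat yhat n J ?h (Suc 0) x = Tser_term n J (1, g) ?h (Suc 0) x"
    unfolding Tser_eq_ssum by (rule ssum_eq_single[OF _ unique]) auto
  then show ?thesis
    by (simp add: Tser_term_u1[OF assms])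
qed

lemma Tser_u1_nonzero:
  assumes "1 \<le> n" "set J \<subseteq> {2..n}" "distinct J" "Tser psihat yhat n J h (Suc 0) x \<noteq> 0"
  obtains g where "h = 2 * int g + int (length J)"
proof -
  from ssum_nonzero_imp[OF assms(4)[unfolded Tser_eq_ssum]]
  obtain k g where "1 \<le> k" "Tser_term n J (k, g) h (Suc 0) x \<noteq> 0"
    by auto
  then have "Wser psihat yhat g (1 # J) True (h - (2 * int g + int (length J))) 0 x \<noteq> 0"
    by (simp add: Tser_term_u1[OF assms(1-3)] split: if_splits)
  from Wser_nonzero_imp[OF this] show ?thesis
    using that by simp
qed

lemma Tser_u2:
  assumes "1 \<le> n" "set J \<subseteq> {2..n}" "distinct J"
  shows "Tser psihat yhat n J (2 * int g + int (length J)) 2 x =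
    (if g = 0 then 0 else Wser psihat yhat (g - 1) (1 # 1 # J) False 0 0 x / 2)"
proof -
  let ?h = "2 * int g + int (length J)"
  have unique: "i = (2, g - 1)" if mem: "i \<in> {(k, g). 1 \<le> k}" and nz_i: "Tser_term n J i ?h 2 x \<noteq> 0" for i
  proof -
    obtain k g' where i: "i = (k, g')" "1 \<le> k" using mem by auto
    from nz_i have k: "k = 2"
      and nz: "Wser psihat yhat g' (1 # 1 # J) False (?h - (2 * int g' + int (length J) + 2)) 0 x \<noteq> 0"
      by (simp_all add: i Tser_term_u2[OF assms i(2)] split: if_splits)
    show ?thesis
      using Wser_nonzero_imp[OF nz] i k by simp
  qed
  have "Tser psihat yhat n J ?h 2 x = Tser_term n J (2, g - 1) ?h 2 x"
    unfolding Tser_eq_ssum by (rule ssum_eq_single[OF _ unique]) auto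
  also have "\<dots> = Wser psihat yhat (g - 1) (1 # 1 # J) False (?h - (2 * int (g - 1) + int (length J) + 2)) 0 x / 2"
    by (simp add: Tser_term_u2[OF assms])
  also have "\<dots> = (if g = 0 then 0 else Wser psihat yhat (g - 1) (1 # 1 # J) False 0 0 x / 2)"
  proof (cases "g = 0")
    case True
    then show ?thesis
      using Wser_nonzero_imp[of "g - 1" "1 # 1 # J" False "?h - (2 * int (g - 1) + int (length J) + 2)" 0 x]
      by auto
  qed (simp add: of_nat_diff)
  finally show ?thesis .
qed

lemma sprod_support_Tser_u2:
  assumes "1 \<le> n" "set J1 \<subseteq> {2..n}" "set J2 \<subseteq> {2..n}" "set J1 \<inter> set J2 = {}"
    and "distinct J1" "distinct J2"
  shows "sprod_support (Tser psihat yhat n J1) (Tser psihat yhat n J2)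
      (2 * int g + int (length J1) + int (length J2)) 2 x \<subseteq>
    (\<lambda>(g1, z1, z2). ((2 * int g1 + int (length J1), Suc 0, z1), (2 * int (g - g1) + int (length J2), Suc 0, z2))) `
      Sigma {..g} (\<lambda>g1. nonzero_splittings (Wser psihat yhat g1 (1 # J1) True) (Wser psihat yhat (g - g1) (1 # J2) True) x)"
proof
  fix q assume q: "q \<in> sprod_support (Tser psihat yhat n J1) (Tser psihat yhat n J2)
      (2 * int g + int (length J1) + int (length J2)) 2 x"
  obtain h1 e1 z1 h2 e2 z2 where qq: "q = ((h1,e1,z1),(h2,e2,z2))" by (cases q) auto
  from q have T1: "Tser psihat yhat n J1 h1 e1 z1 \<noteq> 0" and T2: "Tser psihat yhat n J2 h2 e2 z2 \<noteq> 0"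
    and sums: "h1 + h2 = 2 * int g + int (length J1) + int (length J2)" "e1 + e2 = 2" "\<forall>i. z1 i + z2 i = x i"
    by (simp_all add: qq sprod_support_def)
  have "e1 \<noteq> 0" "e2 \<noteq> 0"
    using T1 T2 Tser_u0 by metis+
  then have e: "e1 = Suc 0" "e2 = Suc 0"
    using sums(2) by auto
  have "Tser psihat yhat n J1 h1 (Suc 0) z1 \<noteq> 0"
    using T1 e by simp
  then obtain g1 where g1: "h1 = 2 * int g1 + int (length J1)"
    by (rule Tser_u1_nonzero[OF assms(1,2,5)])
  have "Tser psihat yhat n J2 h2 (Suc 0) z2 \<noteq> 0"
    using T2 e by simp
  then obtain g2 where g2: "h2 = 2 * int g2 + int (length J2)"
    by (rule Tser_u1_nonzero[OF assms(1,3,6)])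
  have g: "g1 + g2 = g"
    using sums(1) g1 g2 by linarith
  have "Wser psihat yhat g1 (1 # J1) True 0 0 z1 \<noteq> 0" "Wser psihat yhat (g - g1) (1 # J2) True 0 0 z2 \<noteq> 0"
    using T1 T2 e g1 g2 g Tser_u1[OF assms(1,2,5), of g1 z1] Tser_u1[OF assms(1,3,6), of g2 z2] by auto
  then show "q \<in> (\<lambda>(g1, z1, z2). ((2 * int g1 + int (length J1), Suc 0, z1),
      (2 * int (g - g1) + int (length J2), Suc 0, z2))) ` Sigma {..g} (\<lambda>g1. nonzero_splittings
      (Wser psihat yhat g1 (1 # J1) True) (Wser psihat yhat (g - g1) (1 # J2) True) x)"
    unfolding qq using sums(3) e g1 g2 g
    by (auto simp: nonzero_splittings_def intro!: image_eqI[where x = "(g1, z1, z2)"])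
qed

lemma sprod_Tser_u2:
  assumes "1 \<le> n" "set J1 \<subseteq> {2..n}" "set J2 \<subseteq> {2..n}" "set J1 \<inter> set J2 = {}"
    and "distinct J1" "distinct J2"
  shows "sprod (Tser psihat yhat n J1) (Tser psihat yhat n J2)
      (2 * int g + int (length J1) + int (length J2)) 2 x =
    (\<Sum>g1\<le>g. sprod (Wser psihat yhat g1 (1 # J1) True) (Wser psihat yhat (g - g1) (1 # J2) True) 0 0 x)"
proof -
  let ?H = "2 * int g + int (length J1) + int (length J2)"
  let ?T1 = "Tser psihat yhat n J1" and ?T2 = "Tser psihat yhat n J2"
  let ?W1 = "\<lambda>g1. Wser psihat yhat g1 (1 # J1) True" and ?W2 = "\<lambda>g1. Wser psihat yhat (g - g1) (1 # J2) True"
  let ?N = "\<lambda>g1. nonzero_splittings (?W1 g1) (?W2 g1) x"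
  let ?p = "\<lambda>(g1, z1, z2). ((2 * int g1 + int (length J1), Suc 0, z1), (2 * int (g - g1) + int (length J2), Suc 0, z2))"
  have J: "1 \<notin> set J1" "1 \<notin> set J2" using assms(2,3) by auto
  have fin: "finite (?N g1)" for g1
    using finite_nonzero_splittings_Wser[OF assms(5,6) J assms(4)] .
  have "sprod ?T1 ?T2 ?H 2 x = (\<Sum>m\<in>Sigma {..g} ?N.
      case ?p m of ((h1,e1,x1),(h2,e2,x2)) \<Rightarrow> ?T1 h1 e1 x1 * ?T2 h2 e2 x2)"
  proof (rule sprod_eq_sum_cover)
    show "finite (Sigma {..g} ?N)"
      using fin by blast
    show "sprod_support ?T1 ?T2 ?H 2 x \<subseteq> ?p ` Sigma {..g} ?N"
      using sprod_support_Tser_u2[OF assms] .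
    show "inj_on ?p (Sigma {..g} ?N)"
      by (auto simp: inj_on_def)
    show "?p ` Sigma {..g} ?N \<subseteq> splittings ?H 2 x"
      by (auto simp: splittings_def nonzero_splittings_def of_nat_diff)
  qed
  also have "\<dots> = (\<Sum>(g1, z1, z2)\<in>Sigma {..g} ?N. ?W1 g1 0 0 z1 * ?W2 g1 0 0 z2)"
  proof (intro sum.cong refl)
    fix m :: "nat \<times> (nat \<Rightarrow> int) \<times> (nat \<Rightarrow> int)"
    obtain g1 z1 z2 where m: "m = (g1, z1, z2)" by (cases m) auto
    show "(case ?p m of ((h1,e1,x1),(h2,e2,x2)) \<Rightarrow> ?T1 h1 e1 x1 * ?T2 h2 e2 x2) =
        (case m of (g1, z1, z2) \<Rightarrow> ?W1 g1 0 0 z1 * ?W2 g1 0 0 z2)"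
      unfolding m using Tser_u1[OF assms(1,2,5), of g1 z1] Tser_u1[OF assms(1,3,6), of "g - g1" z2] by simp
  qed
  also have "\<dots> = (\<Sum>g1\<le>g. \<Sum>(z1, z2)\<in>?N g1. ?W1 g1 0 0 z1 * ?W2 g1 0 0 z2)"
    using fin by (subst sum.Sigma) auto
  also have "\<dots> = (\<Sum>g1\<le>g. sprod (?W1 g1) (?W2 g1) 0 0 x)"
    by (intro sum.cong refl sprod_eq_sum_nonzero_splittings[symmetric, OF fin Wser_nonzero_imp Wser_nonzero_imp])
  finally show ?thesis .
qed

lemma sprod_Tser_split_u2:
  assumes "1 \<le> n" "I \<subseteq> {2..n}"
  shows "sprod (Tser psihat yhat n (sorted_list_of_set I)) (Tser psihat yhat n (sorted_list_of_set ({2..n} - I)))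
      (2 * int g - 2 + int n + 1) 2 x =
    (\<Sum>g1\<le>g. sprod (Wser psihat yhat g1 (1 # sorted_list_of_set I) True)
      (Wser psihat yhat (g - g1) (1 # sorted_list_of_set ({2..n} - I)) True) 0 0 x)"
proof -
  have fin: "finite I"
    using assms(2) finite_subset by blast
  have "card I + card ({2..n} - I) = card {2..n}"
    using card_Diff_subset[OF fin assms(2)] card_mono[OF _ assms(2)] by simp
  then have h: "2 * int g - 2 + int n + 1 =
      2 * int g + int (length (sorted_list_of_set I)) + int (length (sorted_list_of_set ({2..n} - I)))"
    using assms(1) fin by simp
  have "set (sorted_list_of_set I) \<subseteq> {2..n}" "set (sorted_list_of_set ({2..n} - I)) \<subseteq> {2..n}"
    "set (sorted_list_of_set I) \<inter> set (sorted_list_of_set ({2..n} - I)) = {}"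
    "distinct (sorted_list_of_set I)" "distinct (sorted_list_of_set ({2..n} - I))"
    using assms(2) fin by auto
  then show ?thesis
    unfolding h by (rule sprod_Tser_u2[OF assms(1)])
qed

definition Tprod :: "nat \<Rightarrow> nat \<times> nat list \<Rightarrow> 'a ser" where
  "Tprod n = (\<lambda>(l, as). sscale (1 / fact l)
     (foldr sprod (map (\<lambda>i. Tser psihat yhat n (filter (\<lambda>j. as ! (j - 2) = i) [2..<n + 1])) [1..<l + 1]) sone))"

lemma TT_eq: "TT psihat yhat n = sprod sinvS (opS1 (ssum (Tprod n) (Sigma {1..} (assignments n))))"
proof -
  have "{(l, as). 1 \<le> l \<and> length as = n - 1 \<and> set as \<subseteq> {1..l}} = Sigma {1..} (assignments n)"
    unfolding assignments_def by blast
  then show ?thesis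
    unfolding TT_def Tprod_def by simp
qed

lemma u_order_ge_Tprod: "u_order_ge (Tprod n (l, as)) l"
proof -
  let ?Ts = "map (\<lambda>i. Tser psihat yhat n (filter (\<lambda>j. as ! (j - 2) = i) [2..<n + 1])) [1..<l + 1]"
  have "u_order_ge (foldr sprod ?Ts sone) (length ?Ts)"
    by (rule u_order_ge_foldr_sprod) (use u_order_ge_Tser in auto)
  then show ?thesis
    unfolding Tprod_def split by (intro u_order_ge_sscale) (simp del: upt_Suc)
qed

lemma Tprod_1: "Tprod n (1, replicate (n - 1) 1) = Tser psihat yhat n [2..<n + 1]"
proof -
  have u: "[1..<1 + 1] = [1]"
    by simp
  have f: "filter (\<lambda>j. replicate (n - 1) 1 ! (j - 2) = 1) [2..<n + 1] = [2..<n + 1]"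
    by (rule filter_True) auto
  show ?thesis
    by (simp only: Tprod_def split u list.map f foldr_Cons foldr_Nil o_apply id_apply sprod_sone)
      (simp add: sscale_def fun_eq_iff)
qed

lemma Tprod_2: "Tprod n (2, as) = sscale (1 / 2)
    (sprod (Tser psihat yhat n (filter (\<lambda>j. as ! (j - 2) = 1) [2..<n + 1]))
           (Tser psihat yhat n (filter (\<lambda>j. as ! (j - 2) = 2) [2..<n + 1])))"
proof -
  have "[1..<2 + 1] = [1, 2]"
    by (simp add: upt_rec)
  then show ?thesis
    by (simp add: Tprod_def sprod_sone del: upt_Suc)
qed

lemma u_order_ge_ssum_Tprod: "u_order_ge (ssum (Tprod n) (Sigma {1..} (assignments n))) 1"
proof (rule u_order_ge_ssum)
  fix i assume "i \<in> Sigma {1..} (assignments n)"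
  then obtain l as where "i = (l, as)" "1 \<le> l" by auto
  then show "u_order_ge (Tprod n i) 1"
    using u_order_ge_mono[OF u_order_ge_Tprod] by simp
qed

lemma TT_u2: "TT psihat yhat n h 2 x = Tser psihat yhat n [2..<n + 1] (h + 1) 2 x +
    (\<Sum>as\<in>assignments n 2. sprod (Tser psihat yhat n (filter (\<lambda>j. as ! (j - 2) = 1) [2..<n + 1]))
       (Tser psihat yhat n (filter (\<lambda>j. as ! (j - 2) = 2) [2..<n + 1])) (h + 1) 2 x) / 2"
proof -
  let ?f = "\<lambda>i. Tprod n i (h + 1) 2 x"
  have "TT psihat yhat n h 2 x = ssum (Tprod n) (Sigma {1..} (assignments n)) (h + 1) 2 x"
    unfolding TT_eq by (rule sprod_sinvS_opS1_u2[OF u_order_ge_ssum_Tprod])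
  also have "\<dots> = (\<Sum>i\<in>Sigma {1, 2} (assignments n). ?f i)"
  proof (rule ssum_eq_sum)
    show "finite (Sigma {1, 2} (assignments n))"
      using finite_assignments by blast
    show "Sigma {1, 2} (assignments n) \<subseteq> Sigma {1..} (assignments n)"
      by auto
    fix i assume "i \<in> Sigma {1..} (assignments n)" and nz: "?f i \<noteq> 0"
    then obtain l as where i: "i = (l, as)" "1 \<le> l" "as \<in> assignments n l" by auto
    have "l \<le> 2"
      using nz u_order_geD[OF u_order_ge_Tprod, of 2 l n as] unfolding i(1) by fastforce
    then show "i \<in> Sigma {1, 2} (assignments n)"
      using i by auto
  qed
  also have "\<dots> = (\<Sum>(l, as)\<in>Sigma {1, 2} (assignments n). ?f (l, as))"
    by (simp add: case_prod_beta')
  also have "\<dots> = (\<Sum>as\<in>assignments n 1. ?f (1, as)) + (\<Sum>as\<in>assignments n 2. ?f (2, as))"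
    using finite_assignments by (subst sum.Sigma[symmetric]) auto
  also have "\<dots> = ?f (1, replicate (n - 1) 1) + (\<Sum>as\<in>assignments n 2. ?f (2, as))"
    unfolding assignments_1 by simp
  also have "\<dots> = Tser psihat yhat n [2..<n + 1] (h + 1) 2 x +
    (\<Sum>as\<in>assignments n 2. sprod (Tser psihat yhat n (filter (\<lambda>j. as ! (j - 2) = 1) [2..<n + 1]))
       (Tser psihat yhat n (filter (\<lambda>j. as ! (j - 2) = 2) [2..<n + 1])) (h + 1) 2 x) / 2"
    unfolding Tprod_1 Tprod_2 sscale_def
    by (simp add: sum_divide_distrib)
  finally show ?thesis .
qed


lemma sum_assignments_sprod_Tser_u2:
  assumes "1 \<le> n"
  shows "(\<Sum>as\<in>assignments n 2.
      sprod (Tser psihat yhat n (filter (\<lambda>j. as ! (j - 2) = 1) [2..<n + 1]))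
        (Tser psihat yhat n (filter (\<lambda>j. as ! (j - 2) = 2) [2..<n + 1])) (2 * int g - 2 + int n + 1) 2 x) =
    (\<Sum>g1\<le>g. \<Sum>I\<in>Pow {2..n}. sprod (Wser psihat yhat g1 (1 # sorted_list_of_set I) True)
      (Wser psihat yhat (g - g1) (1 # sorted_list_of_set ({2..n} - I)) True) 0 0 x)"
proof -
  let ?W = "\<lambda>g1 I. sprod (Wser psihat yhat g1 (1 # sorted_list_of_set I) True)
    (Wser psihat yhat (g - g1) (1 # sorted_list_of_set ({2..n} - I)) True) 0 0 x"
  have "(\<Sum>as\<in>assignments n 2.
      sprod (Tser psihat yhat n (filter (\<lambda>j. as ! (j - 2) = 1) [2..<n + 1]))
        (Tser psihat yhat n (filter (\<lambda>j. as ! (j - 2) = 2) [2..<n + 1])) (2 * int g - 2 + int n + 1) 2 x) =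
      (\<Sum>I\<in>Pow {2..n}. sprod (Tser psihat yhat n (sorted_list_of_set I))
        (Tser psihat yhat n (sorted_list_of_set ({2..n} - I))) (2 * int g - 2 + int n + 1) 2 x)"
    by (rule sum_assignments_2)
  also have "\<dots> = (\<Sum>I\<in>Pow {2..n}. \<Sum>g1\<le>g. ?W g1 I)"
    using sprod_Tser_split_u2[OF assms] by (intro sum.cong refl) simp
  also have "\<dots> = (\<Sum>g1\<le>g. \<Sum>I\<in>Pow {2..n}. ?W g1 I)"
    by (rule sum.swap)
  finally show ?thesis .
qed

end

theorem lemma2p18:
  fixes psihat yhat :: "nat \<Rightarrow> nat \<Rightarrow> 'a::field_char_0" and g n :: nat
  assumes "1 \<le> n"
    and "\<forall>a. psihat a 0 = 0"
    and "\<forall>a. yhat a 0 = 0"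
  shows "\<forall>x. 2 * TT psihat yhat n (2 * int g - 2 + int n) 2 x =
           (if g = 0 then 0 else Wser psihat yhat (g - 1) (1 # 1 # [2..<n + 1]) False 0 0 x)
         + (\<Sum>g1\<le>g. \<Sum>I\<in>Pow {2..n}.
              sprod (Wser psihat yhat g1 (1 # sorted_list_of_set I) True)
                    (Wser psihat yhat (g - g1) (1 # sorted_list_of_set ({2..n} - I)) True) 0 0 x)"
proof
  fix x
  have "2 * int g - 2 + int n + 1 = 2 * int g + int (length [2..<n + 1])"
    using assms(1) by simp
  then have "Tser psihat yhat n [2..<n + 1] (2 * int g - 2 + int n + 1) 2 x =
      (if g = 0 then 0 else Wser psihat yhat (g - 1) (1 # 1 # [2..<n + 1]) False 0 0 x / 2)"
    by (simp only:) (rule Tser_u2[OF assms(1)], auto)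
  then show "2 * TT psihat yhat n (2 * int g - 2 + int n) 2 x =
      (if g = 0 then 0 else Wser psihat yhat (g - 1) (1 # 1 # [2..<n + 1]) False 0 0 x)
    + (\<Sum>g1\<le>g. \<Sum>I\<in>Pow {2..n}.
        sprod (Wser psihat yhat g1 (1 # sorted_list_of_set I) True)
          (Wser psihat yhat (g - g1) (1 # sorted_list_of_set ({2..n} - I)) True) 0 0 x)"
    unfolding TT_u2 sum_assignments_sprod_Tser_u2[OF assms(1)] by (simp add: distrib_left)
qed

end
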